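(* Consider three sets of variables $v^\alpha,u^\alpha,w^\alpha$ ($1\le\alpha\le N$) and rational Miura transformations $v^\alpha\mapsto u^\alpha(v^*_*;\varepsilon)$ and $u^\alpha\mapsto w^\alpha(u^*_*;\varepsilon)$ such that $$\frac{\partial u^\alpha(v^*_*;\varepsilon)}{\partial v^1}=\delta^{\alpha,1},\quad\frac{\partial u^\alpha(v^*_*;\varepsilon)^{\mathrm{pol}}}{\partial v^1_x}=0,\quad\frac{\partial w^\alpha(u^*_*;\varepsilon)}{\partial u^1}=\delta^{\alpha,1},\quad\frac{\partial w^\alpha(u^*_*;\varepsilon)^{\mathrm{pol}}}{\partial u^1_x}=0.$$ Then the polynomial part of the composition $v^\alpha\mapsto w^\alpha(u^*_*(v^*_*;\varepsilon);\varepsilon)$ is equal to the composition of the polynomial parts $v^\alpha\mapsto u^\alpha(v^*_*;\varepsilon)^{\mathrm{pol}}$ and $u^\alpha\mapsto w^\alpha(u^*_*;\varepsilon)^{\mathrm{pol}}$.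
   Context: For variables $v^\alpha_k$ ($v^\alpha=v^\alpha_0$, $v^\alpha_x=v^\alpha_1$): $\mathcal A_v$ = polynomials in $v^\alpha_k$, $k>0$, over $\mathbb C[[v^1,\dots,v^N]]$, graded by $\deg v^\alpha_k=k$; $\deg\varepsilon=-1$. $\mathcal A^{\mathrm{rt},[d]}_v$: span of $\sum_{i\ge m}\frac{P_i(v^*_* )}{(v^1_x)^i}$ with $m\in\mathbb Z$, $P_i\in\mathcal A^{[d+i]}_v$, $\partial P_i/\partial v^1_x=0$ (interpreted as formal power series in $v^\alpha_n-\delta^{\alpha,1}\delta_{n,1}$); $\mathcal A^{\mathrm{rt}}_v=\bigoplus_d\mathcal A^{\mathrm{rt},[d]}_v$; polynomial part $\big(\sum_{i\ge m}P_i/(v^1_x)^i\big)^{\mathrm{pol}}=\sum_{i=m}^0P_i/(v^1_x)^i\in\mathcal A_v$; $\widehat{\mathcal A}^{\mathrm{rt}}_v=\mathcal A^{\mathrm{rt}}_v[[\varepsilon]]$, polynomial part taken coefficientwise. Tame: there is $C$ such that no $P_i$ depends on $v^\alpha_k$ with $k>C$ (for each $\varepsilon$-coefficient); $\widehat{\mathcal A}^{\mathrm{rt},\mathrm t,[d]}_v$ = tame elements of degree $d$. A rational Miura transformation is $v^\alpha\mapsto v^\alpha+\varepsilon f^\alpha(v^*_*;\varepsilon)$, $f^\alpha\in\widehat{\mathcal A}^{\mathrm{rt},\mathrm t,[1]}_v$; these form a group (composition is by substitution), and the polynomial part of a rational Miura transformation is an ordinary Miura transformation. The same notations apply to $u$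 and $w$. *)

theory Defs
  imports Complex_Main "HOL-Library.Poly_Mapping" "HOL-Library.Product_Lexorder"
begin

text \<open>Jet variable (a,k) stands for the variable v^a_k (a = 1..N, k = 0,1,2,...);
  (1,1) is v^1_x, the only variable allowed a negative exponent.
  An element of A^rt (epsilon-free) is a coefficient function on monomials;
  an element of A^rt[[eps]] is a sequence (indexed by the power of eps) of such.\<close>

type_synonym jet = "nat \<times> nat"
type_synonym mon = "jet \<Rightarrow>\<^sub>0 int"
type_synonym rdp = "mon \<Rightarrow> complex"
type_synonym ser = "nat \<Rightarrow> rdp"

text \<open>Formal sum of a family with finite support (all sums below are of this kind
  for the elements under consideration).\<close>
definition fsum :: "('i \<Rightarrow> complex) \<Rightarrow> complex" where
  "fsum c = (\<Sum>i\<in>{i. c i \<noteq> 0}. c i)"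

definition ev :: "jet \<Rightarrow> mon" where
  "ev x = Poly_Mapping.single x 1"

definition adm :: "nat \<Rightarrow> mon \<Rightarrow> bool" where
  "adm N n \<longleftrightarrow> (\<forall>x\<in>Poly_Mapping.keys n. 1 \<le> fst x \<and> fst x \<le> N \<and> (0 \<le> Poly_Mapping.lookup n x \<or> x = (1,1)))"

definition wt :: "mon \<Rightarrow> int" where
  "wt n = (\<Sum>x\<in>Poly_Mapping.keys n. int (snd x) * Poly_Mapping.lookup n x)"

text \<open>F lies in hat A^{rt,[d]}_v: the eps^j coefficient is a sum of admissible monomials
  of degree d + j (deg eps = -1).  This is exactly the span of sums
  sum_{i>=m} P_i/(v^1_x)^i with P_i in A^{[d+i]} independent of v^1_x.\<close>
definition homog :: "nat \<Rightarrow> int \<Rightarrow> ser \<Rightarrow> bool" where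
  "homog N d F \<longleftrightarrow> (\<forall>j n. F j n \<noteq> 0 \<longrightarrow> adm N n \<and> wt n - int j = d)"

definition tame :: "ser \<Rightarrow> bool" where
  "tame F \<longleftrightarrow> (\<forall>j. \<exists>C. \<forall>n. F j n \<noteq> 0 \<longrightarrow> (\<forall>x\<in>Poly_Mapping.keys n. snd x \<le> C))"

definition rt_tame :: "nat \<Rightarrow> int \<Rightarrow> ser \<Rightarrow> bool" where
  "rt_tame N d F \<longleftrightarrow> homog N d F \<and> tame F"

definition pol :: "ser \<Rightarrow> ser" where
  "pol F j n = (if 0 \<le> Poly_Mapping.lookup n (1,1) then F j n else 0)"

definition szero :: ser where "szero = (\<lambda>j n. 0)"
definition sone :: ser where "sone = (\<lambda>j n. if j = 0 \<and> n = 0 then 1 else 0)"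

definition pd :: "jet \<Rightarrow> ser \<Rightarrow> ser" where
  "pd x F j n = of_int (Poly_Mapping.lookup n x + 1) * F j (n + ev x)"

text \<open>total x-derivative: sum_{a,k} v^a_{k+1} d/dv^a_k\<close>
definition Dx :: "ser \<Rightarrow> ser" where
  "Dx F j n = fsum (\<lambda>x::jet. of_int (Poly_Mapping.lookup n x + 1) * F j (n + ev x - ev (fst x, Suc (snd x))))"

definition smul :: "ser \<Rightarrow> ser \<Rightarrow> ser" where
  "smul F G j n = (\<Sum>i\<le>j. fsum (\<lambda>p. F i p * G (j - i) (n - p)))"

definition spow :: "ser \<Rightarrow> nat \<Rightarrow> ser" where
  "spow F r = (smul F ^^ r) sone"

text \<open>the Miura transformation v^a |-> v^a + eps f^a as element\<close>
definition miura :: "(nat \<Rightarrow> ser) \<Rightarrow> nat \<Rightarrow> ser" where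
  "miura f a j n = (if j = 0 then (if n = ev (a,0) then 1 else 0) else f a (j - 1) n)"

text \<open>substitution u^a_k := d_x^k (v^a + eps f^a) = v^a_k + eps h_(a,k) into G(u;eps):
  each factor (u_x)^e is expanded as sum_r (e choose r) v_x^(e-r) eps^r h_x^r
  (generalised binomial; for e < 0, which only occurs for x = (1,1), this is the
  expansion of the rational function in eps).\<close>
definition hjet :: "(nat \<Rightarrow> ser) \<Rightarrow> jet \<Rightarrow> ser" where
  "hjet f x = (Dx ^^ snd x) (f (fst x))"

definition hprod :: "(nat \<Rightarrow> ser) \<Rightarrow> (jet \<Rightarrow>\<^sub>0 nat) \<Rightarrow> ser" where
  "hprod f r = foldr smul (map (\<lambda>x. spow (hjet f x) (Poly_Mapping.lookup r x)) (sorted_list_of_set (Poly_Mapping.keys r))) sone"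

definition rsz :: "(jet \<Rightarrow>\<^sub>0 nat) \<Rightarrow> nat" where
  "rsz r = (\<Sum>x\<in>Poly_Mapping.keys r. Poly_Mapping.lookup r x)"

definition bincoef :: "mon \<Rightarrow> (jet \<Rightarrow>\<^sub>0 nat) \<Rightarrow> complex" where
  "bincoef m r = (\<Prod>x\<in>Poly_Mapping.keys r. (of_int (Poly_Mapping.lookup m x) :: complex) gchoose (Poly_Mapping.lookup r x))"

definition subst :: "(nat \<Rightarrow> ser) \<Rightarrow> ser \<Rightarrow> ser" where
  "subst f G J n = fsum (\<lambda>(j, m, r :: jet \<Rightarrow>\<^sub>0 nat).
     if j + rsz r \<le> J
     then G j m * bincoef m r * hprod f r (J - j - rsz r) (n - (m - Poly_Mapping.map int r))
     else 0)"

end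

theory Submission
  imports Defs
begin

text \<open>The hypotheses say that the generators \<open>f\<close> of the inner transformation contain no
  positive power of \<open>v\<^sup>1\<^sub>x\<close> and do not depend on \<open>v\<^sup>1\<close>, and that the outer series
  \<open>G = w\<^sup>\<alpha>\<close> contains no positive power of \<open>u\<^sup>1\<^sub>x\<close>. Both properties of \<open>f\<close> survive \<open>\<partial>\<^sub>x\<close>
  (the only source of \<open>v\<^sup>1\<^sub>x\<close> is \<open>\<partial>\<^sub>x v\<^sup>1\<close>) and products, and on series without positive
  powers of \<open>v\<^sup>1\<^sub>x\<close> the polynomial part is multiplicative: a product of two such monomials
  has no negative power only if both factors have none. In the substitution, a monomial of
  \<open>G\<close> with a negative power of \<open>u\<^sup>1\<^sub>x\<close> only produces monomials with a negative power of
  \<open>v\<^sup>1\<^sub>x\<close>, while a monomial free of \<open>u\<^sup>1\<^sub>x\<close> is expanded without touching \<open>v\<^sup>1\<^sub>x\<close>; so the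
  polynomial part can be taken term by term.\<close>

definition vx_nonpos :: "ser \<Rightarrow> bool" where
  "vx_nonpos F \<longleftrightarrow> (\<forall>j n. F j n \<noteq> 0 \<longrightarrow> Poly_Mapping.lookup n (1,1) \<le> 0)"

definition free_of :: "jet \<Rightarrow> ser \<Rightarrow> bool" where
  "free_of x F \<longleftrightarrow> (\<forall>j n. F j n \<noteq> 0 \<longrightarrow> Poly_Mapping.lookup n x = 0)"

lemma fsum_nonzeroE:
  assumes "fsum c \<noteq> 0" obtains i where "c i \<noteq> 0"
  using assms unfolding fsum_def by (metis (mono_tags, lifting) empty_Collect_eq sum.empty)

lemma fsum_zero: "(\<And>i. c i = 0) \<Longrightarrow> fsum c = 0"
  unfolding fsum_def by simp

lemma if_fsum: "(if P then fsum c else 0) = fsum (\<lambda>i. if P then c i else 0)"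
  by (simp add: fsum_zero)

lemma lookup_ev: "Poly_Mapping.lookup (ev x) y = (if x = y then 1 else 0)"
  unfolding ev_def by (simp add: lookup_single)

lemma lookup_map_int: "Poly_Mapping.lookup (Poly_Mapping.map int r) x = int (Poly_Mapping.lookup r x)"
  by (simp add: Poly_Mapping.map.rep_eq when_def)

lemma free_of_if_pd_eq_szero:
  assumes "pd x F = szero" shows "free_of x F"
  unfolding free_of_def
proof (intro allI impI)
  fix j m assume nz: "F j m \<noteq> 0"
  define n where "n = m - ev x"
  have "m = n + ev x" unfolding n_def by simp
  moreover have "Poly_Mapping.lookup n x + 1 = Poly_Mapping.lookup m x"
    unfolding n_def by (simp add: lookup_minus lookup_ev)
  ultimately have "of_int (Poly_Mapping.lookup m x) * F j m = 0"
    using fun_cong[OF fun_cong[OF assms, of j], of n] by (simp add: pd_def szero_def)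
  then show "Poly_Mapping.lookup m x = 0" using nz by simp
qed

lemma vx_nonpos_if_pd_pol_eq_szero:
  assumes "pd (1,1) (pol F) = szero" shows "vx_nonpos F"
  unfolding vx_nonpos_def
proof (intro allI impI)
  fix j n assume "F j n \<noteq> 0"
  then show "Poly_Mapping.lookup n (1,1) \<le> 0"
    using free_of_if_pd_eq_szero[OF assms] unfolding free_of_def pol_def
    by (smt (verit))
qed

lemma vx_nonpos_sone: "vx_nonpos sone"
  unfolding vx_nonpos_def sone_def by auto

lemma pol_sone: "pol sone = sone"
  unfolding pol_def sone_def by (intro ext) auto

lemma vx_nonpos_smul:
  assumes "vx_nonpos F" "vx_nonpos G" shows "vx_nonpos (smul F G)"
  unfolding vx_nonpos_def
proof (intro allI impI)
  fix j n assume "smul F G j n \<noteq> 0"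
  then obtain i where "fsum (\<lambda>p. F i p * G (j - i) (n - p)) \<noteq> 0"
    unfolding smul_def by (meson sum.not_neutral_contains_not_neutral)
  then obtain p where "F i p * G (j - i) (n - p) \<noteq> 0" by (rule fsum_nonzeroE)
  then have "Poly_Mapping.lookup p (1,1) \<le> 0" "Poly_Mapping.lookup (n - p) (1,1) \<le> 0"
    using assms unfolding vx_nonpos_def by auto
  then show "Poly_Mapping.lookup n (1,1) \<le> 0" by (simp add: lookup_minus)
qed

lemma pol_smul:
  assumes "vx_nonpos F" "vx_nonpos G" shows "pol (smul F G) = smul (pol F) (pol G)"
proof (intro ext)
  fix j n
  show "pol (smul F G) j n = smul (pol F) (pol G) j n"
  proof (cases "0 \<le> Poly_Mapping.lookup n (1,1)")
    case True
    have "F i p * G k (n - p) = pol F i p * pol G k (n - p)" for i k p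
    proof (cases "F i p * G k (n - p) = 0")
      case False
      then have "Poly_Mapping.lookup p (1,1) \<le> 0" "Poly_Mapping.lookup (n - p) (1,1) \<le> 0"
        using assms unfolding vx_nonpos_def by auto
      with True have "Poly_Mapping.lookup p (1,1) = 0" "Poly_Mapping.lookup (n - p) (1,1) = 0"
        by (auto simp: lookup_minus)
      then show ?thesis by (simp add: pol_def)
    qed (auto simp: pol_def)
    then show ?thesis using True unfolding pol_def smul_def by simp
  next
    case False
    then have "pol F i p * pol G k (n - p) = 0" for i k p
      by (auto simp: pol_def lookup_minus)
    with False show ?thesis unfolding smul_def by (simp add: pol_def fsum_zero)
  qed
qed

lemma spow_0: "spow F 0 = sone"
  unfolding spow_def by simp

lemma spow_Suc: "spow F (Suc k) = smul F (spow F k)"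
  unfolding spow_def by simp

lemma vx_nonpos_spow: "vx_nonpos F \<Longrightarrow> vx_nonpos (spow F k)"
  by (induction k) (auto simp: spow_0 spow_Suc vx_nonpos_sone vx_nonpos_smul)

lemma pol_spow: "vx_nonpos F \<Longrightarrow> pol (spow F k) = spow (pol F) k"
  by (induction k) (auto simp: spow_0 spow_Suc pol_sone pol_smul vx_nonpos_spow)

lemma lookup_Dx_shift:
  "Poly_Mapping.lookup (n + ev x - ev (fst x, Suc (snd x))) y
     = Poly_Mapping.lookup n y + (if x = y then 1 else 0) - (if (fst x, Suc (snd x)) = y then 1 else 0)"
  by (simp add: lookup_add lookup_minus lookup_ev)

lemma Dx_nonzeroE:
  assumes "Dx F j n \<noteq> 0"
  obtains x where "Poly_Mapping.lookup n x + 1 \<noteq> 0" "F j (n + ev x - ev (fst x, Suc (snd x))) \<noteq> 0"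
proof -
  obtain x where "of_int (Poly_Mapping.lookup n x + 1) * F j (n + ev x - ev (fst x, Suc (snd x))) \<noteq> 0"
    using assms unfolding Dx_def by (rule fsum_nonzeroE)
  then show thesis
    using that by (metis mult_eq_0_iff of_int_eq_0_iff)
qed

lemma free_of_v1_Dx:
  assumes "free_of (1,0) F" shows "free_of (1,0) (Dx F)"
  unfolding free_of_def
proof (intro allI impI)
  fix j n assume "Dx F j n \<noteq> 0"
  then obtain x where "Poly_Mapping.lookup n x + 1 \<noteq> 0" "F j (n + ev x - ev (fst x, Suc (snd x))) \<noteq> 0"
    by (rule Dx_nonzeroE)
  with assms show "Poly_Mapping.lookup n (1,0) = 0"
    unfolding free_of_def by (fastforce simp: lookup_Dx_shift split: if_splits)
qed

lemma vx_nonpos_Dx: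
  assumes "vx_nonpos F" "free_of (1,0) F" shows "vx_nonpos (Dx F)"
  unfolding vx_nonpos_def
proof (intro allI impI)
  fix j n assume "Dx F j n \<noteq> 0"
  then obtain x where "Poly_Mapping.lookup n x + 1 \<noteq> 0" "F j (n + ev x - ev (fst x, Suc (snd x))) \<noteq> 0"
    by (rule Dx_nonzeroE)
  moreover have "Poly_Mapping.lookup (n + ev x - ev (fst x, Suc (snd x))) (1,1) \<le> 0"
    "Poly_Mapping.lookup (n + ev x - ev (fst x, Suc (snd x))) (1,0) = 0"
    using calculation(2) assms unfolding vx_nonpos_def free_of_def by auto
  ultimately show "Poly_Mapping.lookup n (1,1) \<le> 0"
    unfolding lookup_Dx_shift by (cases x) (auto split: if_splits)
qed

lemma pol_Dx_summand:
  assumes "vx_nonpos F" "free_of (1,0) F"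
  shows "(if 0 \<le> Poly_Mapping.lookup n (1,1)
      then of_int (Poly_Mapping.lookup n x + 1) * F j (n + ev x - ev (fst x, Suc (snd x))) else 0)
    = of_int (Poly_Mapping.lookup n x + 1) * pol F j (n + ev x - ev (fst x, Suc (snd x)))"
    (is "_ = _ * pol F j ?q")
proof (cases "F j ?q = 0")
  case False
  then have "Poly_Mapping.lookup ?q (1,1) \<le> 0" "Poly_Mapping.lookup ?q (1,0) = 0"
    using assms unfolding vx_nonpos_def free_of_def by auto
  then show ?thesis
    unfolding pol_def lookup_Dx_shift by (cases x) (auto simp del: of_int_add split: if_splits)
qed (simp add: pol_def)

lemma pol_Dx:
  assumes "vx_nonpos F" "free_of (1,0) F" shows "pol (Dx F) = Dx (pol F)"
proof (intro ext)
  fix j n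
  have "pol (Dx F) j n = (if 0 \<le> Poly_Mapping.lookup n (1,1) then Dx F j n else 0)"
    by (simp add: pol_def)
  also have "\<dots> = Dx (pol F) j n"
    unfolding Dx_def if_fsum pol_Dx_summand[OF assms] ..
  finally show "pol (Dx F) j n = Dx (pol F) j n" .
qed

lemma pol_Dx_pow:
  assumes "vx_nonpos F" "free_of (1,0) F"
  shows "vx_nonpos ((Dx ^^ k) F) \<and> free_of (1,0) ((Dx ^^ k) F) \<and> pol ((Dx ^^ k) F) = (Dx ^^ k) (pol F)"
proof (induction k)
  case (Suc k)
  then show ?case
    using vx_nonpos_Dx free_of_v1_Dx pol_Dx by (metis comp_apply funpow.simps(2))
qed (use assms in simp)

lemma pol_hjet:
  assumes "vx_nonpos (f (fst x))" "free_of (1,0) (f (fst x))"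
  shows "vx_nonpos (hjet f x) \<and> pol (hjet f x) = hjet (\<lambda>b. pol (f b)) x"
  using pol_Dx_pow[OF assms] unfolding hjet_def by simp

lemma pol_hprod_list:
  assumes "\<And>b. b \<in> A \<Longrightarrow> vx_nonpos (f b)" "\<And>b. b \<in> A \<Longrightarrow> free_of (1,0) (f b)"
    and "\<forall>x\<in>set xs. fst x \<in> A"
  shows "vx_nonpos (foldr smul (map (\<lambda>x. spow (hjet f x) (h x)) xs) sone) \<and>
    pol (foldr smul (map (\<lambda>x. spow (hjet f x) (h x)) xs) sone)
      = foldr smul (map (\<lambda>x. spow (hjet (\<lambda>b. pol (f b)) x) (h x)) xs) sone"
  using assms(3)
proof (induction xs)
  case (Cons x xs)
  then have "vx_nonpos (hjet f x)" "pol (hjet f x) = hjet (\<lambda>b. pol (f b)) x"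
    using pol_hjet assms(1,2) by auto
  with Cons show ?case
    by (simp add: vx_nonpos_smul vx_nonpos_spow pol_smul pol_spow)
qed (simp add: vx_nonpos_sone pol_sone)

lemma pol_hprod:
  assumes "\<And>b. b \<in> A \<Longrightarrow> vx_nonpos (f b)" "\<And>b. b \<in> A \<Longrightarrow> free_of (1,0) (f b)"
    and "\<forall>x\<in>Poly_Mapping.keys r. fst x \<in> A"
  shows "vx_nonpos (hprod f r) \<and> pol (hprod f r) = hprod (\<lambda>b. pol (f b)) r"
  unfolding hprod_def using assms by (intro pol_hprod_list) auto

lemma keys_subset_if_bincoef_nonzero:
  assumes "bincoef m r \<noteq> 0" shows "Poly_Mapping.keys r \<subseteq> Poly_Mapping.keys m"
proof
  fix x assume x: "x \<in> Poly_Mapping.keys r"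
  show "x \<in> Poly_Mapping.keys m"
  proof (rule ccontr)
    assume "x \<notin> Poly_Mapping.keys m"
    with x have "(of_int (Poly_Mapping.lookup m x) :: complex) gchoose (Poly_Mapping.lookup r x) = 0"
      by (simp add: in_keys_iff gbinomial_0_left)
    with x have "bincoef m r = 0"
      unfolding bincoef_def by (meson finite_keys prod_zero)
    with assms show False by simp
  qed
qed

definition subst_summand :: "(nat \<Rightarrow> ser) \<Rightarrow> ser \<Rightarrow> nat \<Rightarrow> mon \<Rightarrow> nat \<times> mon \<times> (jet \<Rightarrow>\<^sub>0 nat) \<Rightarrow> complex" where
  "subst_summand f G J n = (\<lambda>(j, m, r).
     if j + rsz r \<le> J
     then G j m * bincoef m r * hprod f r (J - j - rsz r) (n - (m - Poly_Mapping.map int r))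
     else 0)"

lemma subst_eq_fsum_summand: "subst f G J n = fsum (subst_summand f G J n)"
  unfolding subst_def subst_summand_def ..

lemma pol_subst_summand:
  assumes G: "vx_nonpos G" "\<And>j m. G j m \<noteq> 0 \<Longrightarrow> \<forall>x\<in>Poly_Mapping.keys m. fst x \<in> A"
    and f: "\<And>b. b \<in> A \<Longrightarrow> vx_nonpos (f b)" "\<And>b. b \<in> A \<Longrightarrow> free_of (1,0) (f b)"
  shows "(if 0 \<le> Poly_Mapping.lookup n (1,1) then subst_summand f G J n (j, m, r) else 0)
    = subst_summand (\<lambda>b. pol (f b)) (pol G) J n (j, m, r)"
proof (cases "j + rsz r \<le> J \<and> G j m \<noteq> 0 \<and> bincoef m r \<noteq> 0")
  case True
  then have Gjm: "G j m \<noteq> 0" and bincoef: "bincoef m r \<noteq> 0"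
    by simp_all
  define q where "q = n - (m - Poly_Mapping.map int r)"
  define k where "k = J - j - rsz r"
  have keys_r: "Poly_Mapping.keys r \<subseteq> Poly_Mapping.keys m"
    by (rule keys_subset_if_bincoef_nonzero[OF bincoef])
  with G(2)[OF Gjm] have "\<forall>x\<in>Poly_Mapping.keys r. fst x \<in> A"
    by blast
  note hprod = pol_hprod[OF f this]
  have lookup_q: "Poly_Mapping.lookup q (1,1)
      = Poly_Mapping.lookup n (1,1) - Poly_Mapping.lookup m (1,1) + int (Poly_Mapping.lookup r (1,1))"
    unfolding q_def by (simp add: lookup_minus lookup_map_int)
  have "Poly_Mapping.lookup m (1,1) \<le> 0"
    using G(1) Gjm unfolding vx_nonpos_def by blast
  then consider "Poly_Mapping.lookup m (1,1) < 0" | "Poly_Mapping.lookup m (1,1) = 0"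
    by linarith
  then show ?thesis
  proof cases
    case 1
    \<comment> \<open>then \<open>q\<close> carries a positive power of \<open>v\<^sup>1\<^sub>x\<close>, which no product of the \<open>h\<close>'s contains\<close>
    then have "0 < Poly_Mapping.lookup q (1,1)" if "0 \<le> Poly_Mapping.lookup n (1,1)"
      using lookup_q that by linarith
    then have "0 \<le> Poly_Mapping.lookup n (1,1) \<Longrightarrow> hprod f r k q = 0"
      using hprod[THEN conjunct1] unfolding vx_nonpos_def by (meson not_le)
    moreover have "pol G j m = 0" using 1 by (simp add: pol_def)
    ultimately show ?thesis
      using True unfolding subst_summand_def q_def k_def by auto
  next
    case 2
    with keys_r have "Poly_Mapping.lookup r (1,1) = 0"
      by (auto simp: in_keys_iff)
    have "hprod (\<lambda>b. pol (f b)) r k q = pol (hprod f r) k q"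
      using hprod by simp
    also have "\<dots> = (if 0 \<le> Poly_Mapping.lookup n (1,1) then hprod f r k q else 0)"
      using 2 lookup_q \<open>Poly_Mapping.lookup r (1,1) = 0\<close> by (simp add: pol_def)
    finally have "hprod (\<lambda>b. pol (f b)) r k q
        = (if 0 \<le> Poly_Mapping.lookup n (1,1) then hprod f r k q else 0)" .
    moreover have "pol G j m = G j m" using 2 by (simp add: pol_def)
    ultimately show ?thesis
      using True unfolding subst_summand_def q_def k_def by auto
  qed
qed (auto simp: subst_summand_def pol_def)

lemma pol_subst:
  assumes "vx_nonpos G" "\<And>j m. G j m \<noteq> 0 \<Longrightarrow> \<forall>x\<in>Poly_Mapping.keys m. fst x \<in> A"
    and "\<And>b. b \<in> A \<Longrightarrow> vx_nonpos (f b)" "\<And>b. b \<in> A \<Longrightarrow> free_of (1,0) (f b)"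
  shows "pol (subst f G) = subst (\<lambda>b. pol (f b)) (pol G)"
proof (intro ext)
  fix J n
  have "pol (subst f G) J n
      = (if 0 \<le> Poly_Mapping.lookup n (1,1) then fsum (subst_summand f G J n) else 0)"
    by (simp add: pol_def subst_eq_fsum_summand)
  also have "\<dots> = fsum (subst_summand (\<lambda>b. pol (f b)) (pol G) J n)"
    unfolding if_fsum
    by (rule arg_cong[where f=fsum], rule ext, clarify)
      (rule pol_subst_summand[where G=G and A=A and f=f, OF assms])
  finally show "pol (subst f G) J n = subst (\<lambda>b. pol (f b)) (pol G) J n"
    by (simp add: subst_eq_fsum_summand)
qed

lemma miura_Suc: "miura f a (Suc j) = f a j"
  unfolding miura_def by auto

lemma vx_nonpos_miura_iff: "vx_nonpos (miura f a) \<longleftrightarrow> vx_nonpos (f a)"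
proof -
  have "Poly_Mapping.lookup (ev (a,0)) (1,1) = 0"
    by (simp add: lookup_ev)
  then show ?thesis
    unfolding vx_nonpos_def by (metis miura_Suc miura_def not0_implies_Suc order_refl)
qed

lemma free_of_if_pd_miura_eq:
  assumes "pd x (miura f a) = (if a = 1 then sone else szero)" shows "free_of x (f a)"
proof (rule free_of_if_pd_eq_szero, intro ext)
  fix j n
  have "pd x (f a) j n = pd x (miura f a) (Suc j) n"
    by (simp add: pd_def miura_Suc)
  then show "pd x (f a) j n = szero j n"
    using assms by (simp add: sone_def szero_def)
qed

lemma keys_miura:
  assumes "a \<in> {1..N}" "homog N d (g a)" "miura g a j m \<noteq> 0"
  shows "\<forall>x\<in>Poly_Mapping.keys m. fst x \<in> {1..N}"
proof (cases j)
  case 0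
  with assms(1,3) show ?thesis
    by (auto simp: miura_def ev_def split: if_splits)
next
  case (Suc i)
  with assms(2,3) have "adm N m"
    unfolding homog_def by (simp add: miura_Suc)
  then show ?thesis
    unfolding adm_def by auto
qed

lemma pol_miura: "miura (\<lambda>b. pol (g b)) a = pol (miura g a)"
  by (intro ext) (auto simp: miura_def pol_def lookup_ev)

theorem lemma7p4:
  fixes N :: nat and f g :: "nat \<Rightarrow> ser"
  assumes "1 \<le> N"
    and "\<forall>a\<in>{1..N}. rt_tame N 1 (f a)"
    and "\<forall>a\<in>{1..N}. rt_tame N 1 (g a)"
    and "\<forall>a\<in>{1..N}. pd (1,0) (miura f a) = (if a = 1 then sone else szero)"
    and "\<forall>a\<in>{1..N}. pd (1,1) (pol (miura f a)) = szero"
    and "\<forall>a\<in>{1..N}. pd (1,0) (miura g a) = (if a = 1 then sone else szero)"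
    and "\<forall>a\<in>{1..N}. pd (1,1) (pol (miura g a)) = szero"
  shows "\<forall>a\<in>{1..N}. pol (subst f (miura g a)) = subst (\<lambda>b. pol (f b)) (miura (\<lambda>b. pol (g b)) a)"
proof
  fix a assume a: "a \<in> {1..N}"
  have "vx_nonpos (f b)" if "b \<in> {1..N}" for b
    using assms(5) that vx_nonpos_if_pd_pol_eq_szero vx_nonpos_miura_iff by blast
  moreover have "free_of (1,0) (f b)" if "b \<in> {1..N}" for b
    using assms(4) that free_of_if_pd_miura_eq by blast
  moreover have "vx_nonpos (miura g a)"
    using assms(7) a vx_nonpos_if_pd_pol_eq_szero by blast
  moreover have "\<forall>x\<in>Poly_Mapping.keys m. fst x \<in> {1..N}" if "miura g a j m \<noteq> 0" for j m
    using assms(3) a that keys_miura unfolding rt_tame_def by blast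
  ultimately show "pol (subst f (miura g a)) = subst (\<lambda>b. pol (f b)) (miura (\<lambda>b. pol (g b)) a)"
    unfolding pol_miura by (intro pol_subst[where A = "{1..N}"])
qed

end
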